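(* Let $\gamma$ be an even probability density on $\mathbb{R}$ positive near $0$ and $\mathcal{P}=\mathcal{P}^n_\gamma$ the corresponding sub-spherical family on $\mathbb{R}^n$, let $\delta\ge0$, and let $\eta$ be a $\delta$-regular potential. Then $\mathrm{risk}_\delta(\eta|\mathcal{P}^n_\gamma)\le\epsilon_\delta(\eta|\gamma)$, where $\epsilon_\delta(\eta|\gamma)=\int_{-\infty}^{\infty}e^{-\eta(\delta+s)}\gamma(s)\,ds$.
   Context: The sub-spherical family $\mathcal{P}^n_\gamma$ consists of all even probability densities $p$ on $\mathbb{R}^n$ such that $\int_{\{e^T\xi\ge t\}}p(\xi)d\xi\le\int_t^\infty\gamma(s)ds$ for all unit $e\in\mathbb{R}^n$ and $t\ge0$. A potential is an odd, nondecreasing Borel function $\eta:\mathbb{R}\to\mathbb{R}$; it is $\delta$-regular if $H_{\delta\eta}(s)=e^{-\eta(\delta-s)}+e^{-\eta(\delta+s)}$ is nondecreasing on $s\ge0$. For a family $\mathcal{P}$ of densities on $\mathbb{R}^n$, $\mathrm{risk}_\delta(\eta|\mathcal{P})$ is the smallest $\epsilon$ such that for all unit $e$ and all $p\in\mathcal{P}$: $\int e^{-\eta(\delta+e^T\xi)}p(\xi)d\xi\le\epsilon$ and $\int e^{\eta(e^T\xi-\delta)}p(\xi)d\xi\le\epsilon$. *)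

theory Defs
  imports "HOL-Analysis.Analysis"
begin

definition prob_density :: "('a::euclidean_space \<Rightarrow> real) \<Rightarrow> bool" where
  "prob_density p \<longleftrightarrow> p \<in> borel_measurable lborel \<and> (\<forall>x. 0 \<le> p x)
     \<and> (\<integral>\<^sup>+x. ennreal (p x) \<partial>lborel) = 1"

definition even_density :: "('a::euclidean_space \<Rightarrow> real) \<Rightarrow> bool" where
  "even_density p \<longleftrightarrow> prob_density p \<and> (\<forall>x. p (- x) = p x)"

text \<open>The sub-spherical family P^n_gamma; the dimension is the type 'a.\<close>
definition subspherical :: "(real \<Rightarrow> real) \<Rightarrow> ('a::euclidean_space \<Rightarrow> real) set" where
  "subspherical \<gamma> = {p. even_density p \<and>
     (\<forall>e t. norm e = 1 \<longrightarrow> 0 \<le> t \<longrightarrow>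
        (\<integral>\<^sup>+\<xi>. ennreal (p \<xi>) * indicator {\<xi>. t \<le> e \<bullet> \<xi>} \<xi> \<partial>lborel)
          \<le> (\<integral>\<^sup>+s. ennreal (\<gamma> s) * indicator {t..} s \<partial>lborel))}"

definition potential :: "(real \<Rightarrow> real) \<Rightarrow> bool" where
  "potential \<eta> \<longleftrightarrow> (\<forall>x. \<eta> (- x) = - \<eta> x) \<and> mono \<eta> \<and> \<eta> \<in> borel_measurable borel"

definition regular :: "real \<Rightarrow> (real \<Rightarrow> real) \<Rightarrow> bool" where
  "regular \<delta> \<eta> \<longleftrightarrow> mono_on {0..} (\<lambda>s. exp (- \<eta> (\<delta> - s)) + exp (- \<eta> (\<delta> + s)))"

text \<open>risk: the smallest epsilon bounding both integrals, i.e. their supremum (in [0,\<infinity>]).\<close>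
definition risk :: "real \<Rightarrow> (real \<Rightarrow> real) \<Rightarrow> ('a::euclidean_space \<Rightarrow> real) set \<Rightarrow> ennreal" where
  "risk \<delta> \<eta> P = (SUP ep \<in> {e. norm e = 1} \<times> P.
     max (\<integral>\<^sup>+\<xi>. ennreal (exp (- \<eta> (\<delta> + fst ep \<bullet> \<xi>)) * snd ep \<xi>) \<partial>lborel)
         (\<integral>\<^sup>+\<xi>. ennreal (exp (\<eta> (fst ep \<bullet> \<xi> - \<delta>)) * snd ep \<xi>) \<partial>lborel))"

definition eps :: "real \<Rightarrow> (real \<Rightarrow> real) \<Rightarrow> (real \<Rightarrow> real) \<Rightarrow> ennreal" where
  "eps \<delta> \<eta> \<gamma> = (\<integral>\<^sup>+s. ennreal (exp (- \<eta> (\<delta> + s)) * \<gamma> s) \<partial>lborel)"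

end

theory Submission
  imports Defs "HOL-Probability.Probability_Measure"
begin

text \<open>
  Fix a unit vector \<open>e\<close> and a density \<open>p\<close> of the family, and let \<open>N\<close> and \<open>G\<close> be the laws of
  \<open>e \<bullet> \<xi>\<close> under \<open>p\<close> and of \<open>s\<close> under \<open>\<gamma>\<close>. Both are symmetric probability measures on the line,
  and the sub-spherical condition says exactly that \<open>G\<close> dominates \<open>N\<close> on every tail \<open>[t, \<infinity>)\<close>,
  \<open>t \<ge> 0\<close>. By symmetry both risk integrals equal \<open>\<integral> f dN\<close> with \<open>f s = exp (- \<eta> (\<delta> + s))\<close>,
  which is half of \<open>\<integral> F dN\<close> for the even function \<open>F s = f s + f (- s)\<close>. The \<open>\<delta>\<close>-regularity
  of \<open>\<eta>\<close> says that \<open>F\<close> is nondecreasing on \<open>[0, \<infinity>)\<close>, so its superlevel sets have the form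
  \<open>{\<bar>s\<bar> \<ge> a}\<close> or \<open>{\<bar>s\<bar> > a}\<close>, whose \<open>N\<close>-measure is at most their \<open>G\<close>-measure. The layer-cake
  formula turns this into \<open>\<integral> F dN \<le> \<integral> F dG\<close>, and \<open>\<integral> f dG\<close> is \<open>\<epsilon>\<^sub>\<delta>(\<eta>|\<gamma>)\<close>.
\<close>

lemma nn_integral_layer_cake:
  assumes M: "sigma_finite_measure M"
    and f[measurable]: "f \<in> borel_measurable M" and f_nonneg: "\<And>x. x \<in> space M \<Longrightarrow> 0 \<le> f x"
  shows "(\<integral>\<^sup>+x. ennreal (f x) \<partial>M) = (\<integral>\<^sup>+t\<in>{0..}. emeasure M {x \<in> space M. t < f x} \<partial>lborel)"
proof -
  interpret pair_sigma_finite M lborel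
    using M by (intro pair_sigma_finite.intro lborel.sigma_finite_measure_axioms)
  have "(\<integral>\<^sup>+x. ennreal (f x) \<partial>M) = (\<integral>\<^sup>+x. (\<integral>\<^sup>+t. indicator {0..<f x} t \<partial>lborel) \<partial>M)"
    using f_nonneg by (intro nn_integral_cong) simp
  also have "\<dots> = (\<integral>\<^sup>+t. (\<integral>\<^sup>+x. indicator {0..<f x} t \<partial>M) \<partial>lborel)"
    by (intro Fubini'[symmetric]) (measurable, simp)
  also have "\<dots> = (\<integral>\<^sup>+t\<in>{0..}. emeasure M {x \<in> space M. t < f x} \<partial>lborel)"
  proof (intro nn_integral_cong)
    fix t :: real
    have "(\<integral>\<^sup>+x. indicator {0..<f x} t \<partial>M) = (\<integral>\<^sup>+x. indicator {x \<in> space M. t < f x} x * indicator {0..} t \<partial>M)"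
      by (intro nn_integral_cong) (auto split: split_indicator)
    then show "(\<integral>\<^sup>+x. indicator {0..<f x} t \<partial>M) = emeasure M {x \<in> space M. t < f x} * indicator {0..} t"
      by (simp add: nn_integral_multc)
  qed
  finally show ?thesis .
qed

lemma emeasure_greaterThan_eq_SUP_atLeast:
  fixes M :: "real measure"
  assumes "sets M = sets borel"
  shows "emeasure M {a<..} = (SUP n. emeasure M {a + 1 / Suc n..})"
proof -
  have "incseq (\<lambda>n. {a + 1 / Suc n..})"
    by (intro incseq_SucI) (simp add: frac_le)
  moreover have "{a<..} = (\<Union>n. {a + 1 / Suc n..})"
  proof (intro equalityI subsetI)
    fix x assume "x \<in> {a<..}"
    then obtain n where "inverse (real (Suc n)) < x - a"
      using reals_Archimedean[of "x - a"] by auto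
    then have "x \<in> {a + 1 / Suc n..}"
      by (simp add: inverse_eq_divide)
    then show "x \<in> (\<Union>n. {a + 1 / Suc n..})"
      by blast
  next
    fix x assume "x \<in> (\<Union>n. {a + 1 / Suc n..})"
    then obtain n where "a + 1 / real (Suc n) \<le> x" by auto
    moreover have "0 < 1 / real (Suc n)" by simp
    ultimately have "a < x" by linarith
    then show "x \<in> {a<..}" by simp
  qed
  ultimately show ?thesis
    using assms by (simp add: SUP_emeasure_incseq image_subset_iff)
qed

lemma upward_closed_real_cases:
  fixes A :: "real set"
  assumes "A \<noteq> {}" "bdd_below A" and up: "\<And>s t. s \<in> A \<Longrightarrow> s \<le> t \<Longrightarrow> t \<in> A"
  shows "A = {Inf A..} \<or> A = {Inf A<..}"
proof -
  have "{Inf A<..} \<subseteq> A"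
  proof
    fix t assume "t \<in> {Inf A<..}"
    then obtain s where "s \<in> A" "s < t"
      using cInf_less_iff[OF assms(1,2)] by auto
    then show "t \<in> A"
      using up by simp
  qed
  moreover have "A \<subseteq> {Inf A..}"
    using assms(2) by (auto intro: cInf_lower)
  ultimately show ?thesis
    using up by (cases "Inf A \<in> A") auto
qed

lemma nn_integral_reflect:
  fixes M :: "'a::real_normed_vector measure"
  assumes sym: "distr M borel uminus = M" and sets: "sets M = sets borel"
    and g: "g \<in> borel_measurable borel"
  shows "(\<integral>\<^sup>+x. g (- x) \<partial>M) = (\<integral>\<^sup>+x. g x \<partial>M)"
proof -
  have "(\<integral>\<^sup>+x. g x \<partial>M) = (\<integral>\<^sup>+x. g x \<partial>distr M borel uminus)"
    by (simp add: sym)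
  also have "\<dots> = (\<integral>\<^sup>+x. g (- x) \<partial>M)"
    using g by (intro nn_integral_distr)
      (simp_all add: measurable_cong_sets[OF sets refl] borel_measurable_continuous_onI continuous_on_minus)
  finally show ?thesis ..
qed

lemma emeasure_abs_in_eq_double:
  fixes M :: "real measure"
  assumes sym: "distr M borel uminus = M" and sets: "sets M = sets borel"
    and A: "A \<in> sets borel" "A \<subseteq> {0<..}"
  shows "emeasure M {x. \<bar>x\<bar> \<in> A} = 2 * emeasure M A"
proof -
  have "emeasure M (uminus -` A) = emeasure M A"
    using emeasure_distr[of uminus M borel A] A sets
    by (simp add: sym measurable_cong_sets[OF sets refl] sets_eq_imp_space_eq)
  moreover have "{x. \<bar>x\<bar> \<in> A} = A \<union> uminus -` A"
    using A(2) by (auto simp: abs_if)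
  moreover have "A \<inter> uminus -` A = {}"
  proof -
    have "\<not> (0 < x \<and> 0 < - x)" for x :: real by simp
    then show ?thesis using A(2) by blast
  qed
  moreover have "uminus -` A \<in> sets M"
    using measurable_sets_borel[OF _ A(1), of uminus] by (simp add: sets)
  ultimately show ?thesis
    using A(1) by (simp add: sets plus_emeasure[symmetric] mult_2)
qed

locale symmetric_tail_dominance =
  N: prob_space N + G: prob_space G for N G :: "real measure" +
  assumes sets_N: "sets N = sets borel" and sets_G: "sets G = sets borel"
    and distr_N_uminus: "distr N borel uminus = N" and distr_G_uminus: "distr G borel uminus = G"
    and emeasure_atLeast_le: "\<And>t. 0 \<le> t \<Longrightarrow> emeasure N {t..} \<le> emeasure G {t..}"
begin

lemma emeasure_greaterThan_le:
  assumes "0 \<le> a"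
  shows "emeasure N {a<..} \<le> emeasure G {a<..}"
  unfolding emeasure_greaterThan_eq_SUP_atLeast[OF sets_N] emeasure_greaterThan_eq_SUP_atLeast[OF sets_G]
proof (intro SUP_mono)
  fix n :: nat
  have "0 \<le> a + 1 / Suc n"
    using assms by simp
  then show "\<exists>m\<in>UNIV. emeasure N {a + 1 / Suc n..} \<le> emeasure G {a + 1 / Suc m..}"
    using emeasure_atLeast_le by blast
qed

lemma emeasure_abs_in_le:
  assumes A: "A \<subseteq> {0..}" and up: "\<And>s t. s \<in> A \<Longrightarrow> s \<le> t \<Longrightarrow> t \<in> A"
  shows "emeasure N {x. \<bar>x\<bar> \<in> A} \<le> emeasure G {x. \<bar>x\<bar> \<in> A}"
proof (cases "A = {}")
  case True
  then show ?thesis by simp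
next
  case False
  define a where "a = Inf A"
  have bdd: "bdd_below A"
    using A by (auto intro: bdd_belowI[of _ 0])
  then have "0 \<le> a"
    unfolding a_def using False A by (auto intro: cInf_greatest)
  have abs_in_eq: "emeasure N {x. \<bar>x\<bar> \<in> B} = 2 * emeasure N B \<and>
      emeasure G {x. \<bar>x\<bar> \<in> B} = 2 * emeasure G B"
    if "B \<in> sets borel" "B \<subseteq> {0<..}" for B
    using emeasure_abs_in_eq_double[OF distr_N_uminus sets_N that]
      emeasure_abs_in_eq_double[OF distr_G_uminus sets_G that] by simp
  from upward_closed_real_cases[OF False bdd] up
  consider "A = {a..}" | "A = {a<..}"
    unfolding a_def by blast
  then show ?thesis
  proof cases
    case 1
    show ?thesis
    proof (cases "a = 0")
      case True
      then have "{x. \<bar>x\<bar> \<in> A} = UNIV"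
        using 1 by auto
      then show ?thesis
        using N.emeasure_space_1 G.emeasure_space_1
        by (simp add: sets_eq_imp_space_eq[OF sets_N] sets_eq_imp_space_eq[OF sets_G])
    next
      case False
      with \<open>0 \<le> a\<close> have "{a..} \<subseteq> {0<..}"
        by auto
      then show ?thesis
        using 1 abs_in_eq[of "{a..}"] emeasure_atLeast_le[OF \<open>0 \<le> a\<close>]
        by (simp add: mult_left_mono)
    qed
  next
    case 2
    have "{a<..} \<subseteq> {0<..}"
      using \<open>0 \<le> a\<close> by auto
    then show ?thesis
      using 2 abs_in_eq[of "{a<..}"] emeasure_greaterThan_le[OF \<open>0 \<le> a\<close>]
      by (simp add: mult_left_mono)
  qed
qed

lemma nn_integral_even_mono:
  assumes F: "F \<in> borel_measurable borel" "\<And>x. 0 \<le> F x"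
    and even: "\<And>x. F (- x) = F x" and mono: "mono_on {0..} F"
  shows "(\<integral>\<^sup>+x. ennreal (F x) \<partial>N) \<le> (\<integral>\<^sup>+x. ennreal (F x) \<partial>G)"
proof -
  have "F x = F \<bar>x\<bar>" for x
    using even[of x] by (cases "0 \<le> x") simp_all
  then have superlevel: "{x. t < F x} = {x. \<bar>x\<bar> \<in> {s \<in> {0..}. t < F s}}" for t
    by auto
  have superlevel_le: "emeasure N {x. t < F x} \<le> emeasure G {x. t < F x}" for t
    unfolding superlevel
  proof (rule emeasure_abs_in_le)
    show "s' \<in> {s \<in> {0..}. t < F s}" if "s \<in> {s \<in> {0..}. t < F s}" "s \<le> s'" for s s'
      using that mono_onD[OF mono, of s s'] by auto
  qed auto
  have "(\<integral>\<^sup>+x. ennreal (F x) \<partial>N) = (\<integral>\<^sup>+t\<in>{0..}. emeasure N {x. t < F x} \<partial>lborel)"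
    using nn_integral_layer_cake[OF N.sigma_finite_measure_axioms, of F] F
    by (simp add: measurable_cong_sets[OF sets_N refl] sets_eq_imp_space_eq[OF sets_N])
  also have "\<dots> \<le> (\<integral>\<^sup>+t\<in>{0..}. emeasure G {x. t < F x} \<partial>lborel)"
    by (intro nn_integral_mono mult_right_mono superlevel_le) simp
  also have "\<dots> = (\<integral>\<^sup>+x. ennreal (F x) \<partial>G)"
    using nn_integral_layer_cake[OF G.sigma_finite_measure_axioms, of F] F
    by (simp add: measurable_cong_sets[OF sets_G refl] sets_eq_imp_space_eq[OF sets_G])
  finally show ?thesis .
qed

lemma nn_integral_mono_if_even_part_mono:
  assumes f[measurable]: "f \<in> borel_measurable borel" and f_nonneg: "\<And>x. 0 \<le> f x"
    and mono: "mono_on {0..} (\<lambda>s. f s + f (- s))"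
  shows "(\<integral>\<^sup>+x. ennreal (f x) \<partial>N) \<le> (\<integral>\<^sup>+x. ennreal (f x) \<partial>G)"
proof -
  have even_part: "(\<integral>\<^sup>+x. ennreal (f x + f (- x)) \<partial>M) = 2 * (\<integral>\<^sup>+x. ennreal (f x) \<partial>M)"
    if sym: "distr M borel uminus = M" and sets: "sets M = sets borel" for M :: "real measure"
  proof -
    have "(\<integral>\<^sup>+x. ennreal (f x + f (- x)) \<partial>M) = (\<integral>\<^sup>+x. ennreal (f x) \<partial>M) + (\<integral>\<^sup>+x. ennreal (f (- x)) \<partial>M)"
      using f_nonneg by (simp add: nn_integral_add measurable_cong_sets[OF sets refl])
    also have "(\<integral>\<^sup>+x. ennreal (f (- x)) \<partial>M) = (\<integral>\<^sup>+x. ennreal (f x) \<partial>M)"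
      by (rule nn_integral_reflect[OF sym sets]) simp
    finally show ?thesis
      by (simp add: mult_2)
  qed
  have "2 * (\<integral>\<^sup>+x. ennreal (f x) \<partial>N) \<le> 2 * (\<integral>\<^sup>+x. ennreal (f x) \<partial>G)"
    unfolding even_part[OF distr_N_uminus sets_N, symmetric] even_part[OF distr_G_uminus sets_G, symmetric]
    using f_nonneg by (intro nn_integral_even_mono mono) (simp_all add: add_nonneg_nonneg)
  then show ?thesis
    by (simp add: ennreal_mult_le_mult_iff)
qed

end

lemma lborel_distr_uminus_euclidean: "distr lborel borel uminus = (lborel :: 'a::euclidean_space measure)"
proof -
  have "(lborel :: 'a measure) = density (distr lborel borel (\<lambda>x. 0 + (-1) *\<^sub>R x)) (\<lambda>_. \<bar>-1::real\<bar> ^ DIM('a))"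
    by (rule lborel_affine) simp
  then show ?thesis
    by (simp add: density_1 one_ennreal_def[symmetric])
qed

definition projection_measure :: "('a::euclidean_space \<Rightarrow> real) \<Rightarrow> 'a \<Rightarrow> real measure" where
  "projection_measure p e = distr (density lborel (\<lambda>\<xi>. ennreal (p \<xi>))) borel (\<lambda>\<xi>. e \<bullet> \<xi>)"

lemma sets_projection_measure [simp]: "sets (projection_measure p e) = sets borel"
  by (simp add: projection_measure_def)

lemma space_projection_measure [simp]: "space (projection_measure p e) = UNIV"
  by (simp add: projection_measure_def)

lemma nn_integral_projection_measure:
  assumes [measurable]: "p \<in> borel_measurable lborel" "g \<in> borel_measurable borel"
  shows "(\<integral>\<^sup>+x. g x \<partial>projection_measure p e) = (\<integral>\<^sup>+\<xi>. ennreal (p \<xi>) * g (e \<bullet> \<xi>) \<partial>lborel)"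
  unfolding projection_measure_def by (simp add: nn_integral_distr nn_integral_density)

lemma emeasure_projection_measure:
  assumes p: "p \<in> borel_measurable lborel" and A: "A \<in> sets borel"
  shows "emeasure (projection_measure p e) A = (\<integral>\<^sup>+\<xi>. ennreal (p \<xi>) * indicator A (e \<bullet> \<xi>) \<partial>lborel)"
  using nn_integral_projection_measure[OF p, of "indicator A"] A by simp

lemma prob_space_projection_measure:
  assumes "prob_density p"
  shows "prob_space (projection_measure p e)"
proof (rule prob_spaceI)
  show "emeasure (projection_measure p e) (space (projection_measure p e)) = 1"
    using assms emeasure_projection_measure[of p UNIV e] by (simp add: prob_density_def)
qed

lemma distr_projection_measure_uminus:
  assumes p[measurable]: "p \<in> borel_measurable lborel" and even: "\<And>x. p (- x) = p x"
  shows "distr (projection_measure p e) borel uminus = projection_measure p e"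
proof -
  define D where "D = density lborel (\<lambda>\<xi>. ennreal (p \<xi>))"
  have "distr D borel uminus = density (distr lborel borel uminus) (\<lambda>\<xi>. ennreal (p \<xi>))"
    unfolding D_def by (subst density_distr) (simp_all add: even)
  then have D_sym: "distr D borel uminus = D"
    by (simp add: lborel_distr_uminus_euclidean D_def)
  have "distr (distr D borel (\<lambda>\<xi>. e \<bullet> \<xi>)) borel uminus = distr D borel ((\<lambda>\<xi>. e \<bullet> \<xi>) \<circ> uminus)"
    by (subst distr_distr) (simp_all add: D_def comp_def)
  also have "\<dots> = distr (distr D borel uminus) borel (\<lambda>\<xi>. e \<bullet> \<xi>)"
    by (subst distr_distr) (simp_all add: D_def)
  finally show ?thesis
    unfolding projection_measure_def D_def[symmetric] D_sym .
qed

lemma symmetric_tail_dominance_projection_measure: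
  assumes \<gamma>: "even_density \<gamma>" and p: "p \<in> subspherical \<gamma>" and e: "norm e = 1"
  shows "symmetric_tail_dominance (projection_measure p e) (projection_measure \<gamma> 1)"
proof -
  have p_density: "prob_density p" and p_even: "\<And>x. p (- x) = p x"
    and p_tail: "\<And>t. 0 \<le> t \<Longrightarrow> (\<integral>\<^sup>+\<xi>. ennreal (p \<xi>) * indicator {\<xi>. t \<le> e \<bullet> \<xi>} \<xi> \<partial>lborel)
          \<le> (\<integral>\<^sup>+s. ennreal (\<gamma> s) * indicator {t..} s \<partial>lborel)"
    using p e by (auto simp: subspherical_def even_density_def)
  have \<gamma>_density: "prob_density \<gamma>" and \<gamma>_even: "\<And>x. \<gamma> (- x) = \<gamma> x"
    using \<gamma> by (auto simp: even_density_def)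
  have p_meas: "p \<in> borel_measurable lborel" and \<gamma>_meas: "\<gamma> \<in> borel_measurable lborel"
    using p_density \<gamma>_density by (auto simp: prob_density_def)
  have tail: "emeasure (projection_measure p e) {t..} \<le> emeasure (projection_measure \<gamma> 1) {t..}"
    if "0 \<le> t" for t
  proof -
    have "emeasure (projection_measure p e) {t..} = (\<integral>\<^sup>+\<xi>. ennreal (p \<xi>) * indicator {\<xi>. t \<le> e \<bullet> \<xi>} \<xi> \<partial>lborel)"
      by (simp add: emeasure_projection_measure[OF p_meas] indicator_def)
    also have "\<dots> \<le> (\<integral>\<^sup>+s. ennreal (\<gamma> s) * indicator {t..} s \<partial>lborel)"
      by (rule p_tail[OF that])
    also have "\<dots> = emeasure (projection_measure \<gamma> 1) {t..}"
      by (simp add: emeasure_projection_measure[OF \<gamma>_meas])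
    finally show ?thesis .
  qed
  show ?thesis
    unfolding symmetric_tail_dominance_def symmetric_tail_dominance_axioms_def
    using prob_space_projection_measure[OF p_density] prob_space_projection_measure[OF \<gamma>_density]
      distr_projection_measure_uminus[OF p_meas p_even] distr_projection_measure_uminus[OF \<gamma>_meas \<gamma>_even]
      tail by simp
qed

lemma risk_integrals_eq_projection_measure:
  fixes p :: "'a::euclidean_space \<Rightarrow> real"
  assumes p: "p \<in> borel_measurable lborel" and p_even: "\<And>x. p (- x) = p x" and \<eta>: "potential \<eta>"
  shows "(\<integral>\<^sup>+\<xi>. ennreal (exp (- \<eta> (\<delta> + e \<bullet> \<xi>)) * p \<xi>) \<partial>lborel)
      = (\<integral>\<^sup>+x. ennreal (exp (- \<eta> (\<delta> + x))) \<partial>projection_measure p e)"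
    and "(\<integral>\<^sup>+\<xi>. ennreal (exp (\<eta> (e \<bullet> \<xi> - \<delta>)) * p \<xi>) \<partial>lborel)
      = (\<integral>\<^sup>+x. ennreal (exp (- \<eta> (\<delta> + x))) \<partial>projection_measure p e)"
proof -
  have \<eta>_odd: "\<And>x. \<eta> (- x) = - \<eta> x" and [measurable]: "\<eta> \<in> borel_measurable borel"
    using \<eta> by (auto simp: potential_def)
  show "(\<integral>\<^sup>+\<xi>. ennreal (exp (- \<eta> (\<delta> + e \<bullet> \<xi>)) * p \<xi>) \<partial>lborel)
      = (\<integral>\<^sup>+x. ennreal (exp (- \<eta> (\<delta> + x))) \<partial>projection_measure p e)"
    by (simp add: nn_integral_projection_measure[OF p] ennreal_mult'' mult.commute)
  have "\<eta> (e \<bullet> \<xi> - \<delta>) = - \<eta> (\<delta> + - (e \<bullet> \<xi>))" for \<xi>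
    using \<eta>_odd[of "\<delta> + - (e \<bullet> \<xi>)"] by simp
  then have "(\<integral>\<^sup>+\<xi>. ennreal (exp (\<eta> (e \<bullet> \<xi> - \<delta>)) * p \<xi>) \<partial>lborel)
      = (\<integral>\<^sup>+x. ennreal (exp (- \<eta> (\<delta> + - x))) \<partial>projection_measure p e)"
    by (simp add: nn_integral_projection_measure[OF p] ennreal_mult'' mult.commute)
  also have "\<dots> = (\<integral>\<^sup>+x. ennreal (exp (- \<eta> (\<delta> + x))) \<partial>projection_measure p e)"
    by (rule nn_integral_reflect[OF distr_projection_measure_uminus[OF p p_even] sets_projection_measure])
      simp
  finally show "(\<integral>\<^sup>+\<xi>. ennreal (exp (\<eta> (e \<bullet> \<xi> - \<delta>)) * p \<xi>) \<partial>lborel)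
      = (\<integral>\<^sup>+x. ennreal (exp (- \<eta> (\<delta> + x))) \<partial>projection_measure p e)" .
qed

lemma nn_integral_projection_measure_le_eps:
  assumes \<gamma>: "even_density \<gamma>" and \<eta>: "potential \<eta>" and reg: "regular \<delta> \<eta>"
    and p: "p \<in> subspherical \<gamma>" and e: "norm e = 1"
  shows "(\<integral>\<^sup>+x. ennreal (exp (- \<eta> (\<delta> + x))) \<partial>projection_measure p e) \<le> eps \<delta> \<eta> \<gamma>"
proof -
  interpret symmetric_tail_dominance "projection_measure p e" "projection_measure \<gamma> 1"
    by (rule symmetric_tail_dominance_projection_measure[OF \<gamma> p e])
  have [measurable]: "\<eta> \<in> borel_measurable borel"
    using \<eta> by (simp add: potential_def)
  have \<gamma>_meas: "\<gamma> \<in> borel_measurable lborel" and \<gamma>_even: "\<And>x. \<gamma> (- x) = \<gamma> x"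
    using \<gamma> by (auto simp: even_density_def prob_density_def)
  have "(\<lambda>s. exp (- \<eta> (\<delta> + s)) + exp (- \<eta> (\<delta> + - s))) = (\<lambda>s. exp (- \<eta> (\<delta> - s)) + exp (- \<eta> (\<delta> + s)))"
    by (auto simp: fun_eq_iff)
  then have "(\<integral>\<^sup>+x. ennreal (exp (- \<eta> (\<delta> + x))) \<partial>projection_measure p e)
      \<le> (\<integral>\<^sup>+x. ennreal (exp (- \<eta> (\<delta> + x))) \<partial>projection_measure \<gamma> 1)"
    using reg by (intro nn_integral_mono_if_even_part_mono) (simp_all add: regular_def)
  also have "\<dots> = eps \<delta> \<eta> \<gamma>"
    using risk_integrals_eq_projection_measure(1)[OF \<gamma>_meas \<gamma>_even \<eta>, of \<delta> 1]
    by (simp add: eps_def)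
  finally show ?thesis .
qed

theorem proposition2p13:
  fixes \<gamma> :: "real \<Rightarrow> real" and \<eta> :: "real \<Rightarrow> real" and \<delta> :: real
  assumes "even_density \<gamma>"
    and "\<exists>r>0. \<forall>s. \<bar>s\<bar> < r \<longrightarrow> 0 < \<gamma> s"
    and "0 \<le> \<delta>"
    and "potential \<eta>"
    and "regular \<delta> \<eta>"
  shows "risk \<delta> \<eta> (subspherical \<gamma> :: ('a::euclidean_space \<Rightarrow> real) set) \<le> eps \<delta> \<eta> \<gamma>"
  unfolding risk_def
proof (rule SUP_least, clarify)
  fix e :: 'a and p :: "'a \<Rightarrow> real"
  assume e: "norm e = 1" and p: "p \<in> subspherical \<gamma>"
  then have "p \<in> borel_measurable lborel" "\<And>x. p (- x) = p x"
    by (auto simp: subspherical_def even_density_def prob_density_def)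
  with nn_integral_projection_measure_le_eps[OF assms(1,4,5) p e]
  show "max (\<integral>\<^sup>+\<xi>. ennreal (exp (- \<eta> (\<delta> + fst (e, p) \<bullet> \<xi>)) * snd (e, p) \<xi>) \<partial>lborel)
            (\<integral>\<^sup>+\<xi>. ennreal (exp (\<eta> (fst (e, p) \<bullet> \<xi> - \<delta>)) * snd (e, p) \<xi>) \<partial>lborel) \<le> eps \<delta> \<eta> \<gamma>"
    by (simp add: risk_integrals_eq_projection_measure[OF _ _ assms(4)])
qed

end
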